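(* There is a constant $C_1>0$ such that $$\mathcal{A}(\{z\in\mathbb{D}:|f(z)|>\lambda\})\le\frac{C_1}{\lambda^2}\,|f(0)|^2$$ for every analytic function $f\colon\mathbb{D}\to\Pi^+$ and every $\lambda>0$. In particular, there is a constant $K_1>0$ such that $\|f\|_{L^1(\mathbb{D},\mathcal{A})}\le K_1|f(0)|$ for every such function.
   Context: $\mathbb{D}$ is the open unit disk, $\mathcal{A}$ the normalized area measure $dx\,dy/\pi$ on $\mathbb{D}$, and $\Pi^+=\{z\in\mathbb{C}:\operatorname{Re}z>0\}$. *)

theory Defs
  imports "HOL-Complex_Analysis.Complex_Analysis"
begin

definition disk_area :: "complex measure" where
  "disk_area = scale_measure (ennreal (1 / pi)) (restrict_space lborel (ball 0 1))"

end

theory Submission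
  imports Defs
begin

text \<open>
  For \<open>|z| < r < 1\<close> the Schwarz integral formula bounds \<open>|f z|\<close> by \<open>|Im f(0)|\<close> plus the
  integral of \<open>2 r Re f(w) / |w - z|\<close> over the circle \<open>|w| = r\<close>, and the positive weights
  \<open>Re f(w)\<close> average to \<open>Re f(0)\<close>. Since \<open>\<integral>\<^sub>E |w - z|\<^sup>-\<^sup>1 dz \<le> (1 + 4\<pi>) \<surd>|E|\<close> for every
  set \<open>E\<close> of finite area, integrating over \<open>E = {|f| > \<lambda>}\<close> gives
  \<open>\<lambda> |E| \<le> |f(0)| (|E| + 2 (1 + 4\<pi>) \<surd>|E|)\<close>, hence \<open>|E| \<le> 16 (1 + 4\<pi>)\<^sup>2 |f(0)|\<^sup>2 / \<lambda>\<^sup>2\<close> once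
  \<open>\<lambda> > 2 |f(0)|\<close>. Summing the weak-type bound over the dyadic level sets
  \<open>{|f| > 2\<^sup>k |f(0)|}\<close> gives the \<open>L\<^sup>1\<close> bound.
\<close>

lemma ex_dyadic_bracket:
  fixes x :: real
  assumes "1 < x"
  obtains k :: nat where "2 ^ k < x" "x \<le> 2 ^ Suc k"
proof -
  obtain N where "x < 2 ^ N" using real_arch_pow[of 2 x] by auto
  define n where "n = (LEAST n. x \<le> (2::real) ^ n)"
  have n: "x \<le> 2 ^ n"
    unfolding n_def by (rule LeastI[of _ N]) (use \<open>x < 2 ^ N\<close> in simp)
  then obtain k where k: "n = Suc k" using assms by (cases n) auto
  then have "\<not> x \<le> 2 ^ k"
    using not_less_Least[of k "\<lambda>n. x \<le> (2::real) ^ n"] unfolding n_def by auto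
  with n k that show thesis by (simp add: not_le)
qed

lemma ennreal_mult_left_le:
  assumes "x \<le> ennreal b" "0 \<le> a"
  shows "ennreal a * x \<le> ennreal (a * b)"
  using mult_left_mono[OF assms(1), of "ennreal a"] assms(2) by (simp add: ennreal_mult')

lemma nn_integral_le_dyadic_layers:
  fixes g :: "'a \<Rightarrow> real"
  assumes g [measurable]: "g \<in> borel_measurable M" and a: "0 < a"
  shows "(\<integral>\<^sup>+x. ennreal (g x) \<partial>M) \<le> ennreal a * emeasure M {x \<in> space M. 0 < g x}
           + (\<Sum>k. ennreal (a * 2 ^ Suc k) * emeasure M {x \<in> space M. a * 2 ^ k < g x})"
proof -
  define P where "P = {x \<in> space M. 0 < g x}"
  define L where "L k = {x \<in> space M. a * 2 ^ k < g x}" for k :: nat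
  have [measurable]: "P \<in> sets M" "L k \<in> sets M" for k
    unfolding P_def L_def by measurable
  define F where "F x k = ennreal (a * 2 ^ Suc k) * indicator (L k) x" for x k
  have "ennreal (g x) \<le> ennreal a * indicator P x + (\<Sum>k. F x k)" if x: "x \<in> space M" for x
  proof (cases "g x \<le> a")
    case True
    then have "ennreal (g x) \<le> ennreal a * indicator P x"
      using x by (auto simp: P_def indicator_def ennreal_leI ennreal_neg)
    then show ?thesis by (simp add: add_increasing2)
  next
    case False
    then obtain k where k: "2 ^ k < g x / a" "g x / a \<le> 2 ^ Suc k"
      using ex_dyadic_bracket[of "g x / a"] a by auto
    then have "x \<in> L k" "g x \<le> a * 2 ^ Suc k"
      using x a by (auto simp: L_def field_simps)
    then have "ennreal (g x) \<le> F x k"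
      by (simp add: F_def ennreal_leI)
    also have "\<dots> \<le> (\<Sum>k. F x k)"
      using sum_le_suminf[of "F x" "{k}"] by (simp add: summableI)
    finally show ?thesis by (simp add: add_increasing)
  qed
  then have "(\<integral>\<^sup>+x. ennreal (g x) \<partial>M) \<le> (\<integral>\<^sup>+x. ennreal a * indicator P x + (\<Sum>k. F x k) \<partial>M)"
    by (rule nn_integral_mono)
  also have "\<dots> = ennreal a * emeasure M P + (\<Sum>k. ennreal (a * 2 ^ Suc k) * emeasure M (L k))"
    by (simp add: F_def nn_integral_add nn_integral_suminf nn_integral_cmult_indicator)
  finally show ?thesis unfolding P_def L_def .
qed

lemma suminf_ennreal_half_powers:
  assumes "0 \<le> c"
  shows "(\<Sum>k. ennreal (c * (1 / 2) ^ k)) = ennreal (2 * c)"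
proof -
  have "(\<Sum>k. ennreal (c * (1 / 2) ^ k)) = ennreal (\<Sum>k. c * (1 / 2) ^ k)"
    using assms by (intro suminf_ennreal2) (auto intro!: summable_mult summable_geometric)
  also have "(\<Sum>k. c * (1 / 2 :: real) ^ k) = 2 * c"
    using suminf_mult[OF summable_geometric[of "1/2::real"], of c] suminf_geometric[of "1/2::real"]
    by simp
  finally show ?thesis .
qed

lemma nn_integral_le_of_weak_type_bound:
  fixes g :: "'a \<Rightarrow> real"
  assumes g [measurable]: "g \<in> borel_measurable M" and a: "0 < a" and m: "0 \<le> m" and C: "0 \<le> C"
    and support: "emeasure M {x \<in> space M. 0 < g x} \<le> ennreal m"
    and weak: "\<And>lam. 0 < lam \<Longrightarrow> emeasure M {x \<in> space M. lam < g x} \<le> ennreal (C / lam\<^sup>2)"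
  shows "(\<integral>\<^sup>+x. ennreal (g x) \<partial>M) \<le> ennreal (a * m + 4 * C / a)"
proof -
  have layer: "ennreal (a * 2 ^ Suc k) * emeasure M {x \<in> space M. a * 2 ^ k < g x}
      \<le> ennreal (2 * C / a * (1 / 2) ^ k)" for k :: nat
  proof -
    have "ennreal (a * 2 ^ Suc k) * emeasure M {x \<in> space M. a * 2 ^ k < g x}
        \<le> ennreal (a * 2 ^ Suc k * (C / (a * 2 ^ k)\<^sup>2))"
      using a by (intro ennreal_mult_left_le weak) auto
    also have "a * 2 ^ Suc k * (C / (a * 2 ^ k)\<^sup>2) = 2 * C / a * (1 / 2) ^ k"
      using a by (simp add: power2_eq_square power_mult_distrib field_simps)
    finally show ?thesis .
  qed
  have "(\<Sum>k. ennreal (a * 2 ^ Suc k) * emeasure M {x \<in> space M. a * 2 ^ k < g x})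
      \<le> (\<Sum>k. ennreal (2 * C / a * (1 / 2) ^ k))"
    by (rule suminf_le[OF layer summableI summableI])
  also have "\<dots> = ennreal (2 * (2 * C / a))"
    using a C by (intro suminf_ennreal_half_powers) simp
  finally have layers: "(\<Sum>k. ennreal (a * 2 ^ Suc k) * emeasure M {x \<in> space M. a * 2 ^ k < g x})
      \<le> ennreal (2 * (2 * C / a))" .
  have "(\<integral>\<^sup>+x. ennreal (g x) \<partial>M) \<le> ennreal a * emeasure M {x \<in> space M. 0 < g x}
      + (\<Sum>k. ennreal (a * 2 ^ Suc k) * emeasure M {x \<in> space M. a * 2 ^ k < g x})"
    using a by (intro nn_integral_le_dyadic_layers) auto
  also have "\<dots> \<le> ennreal (a * m) + ennreal (2 * (2 * C / a))"
    using a by (intro add_mono layers ennreal_mult_left_le support) simp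
  also have "\<dots> = ennreal (a * m + 4 * C / a)"
    using a m C by (simp flip: ennreal_plus)
  finally show ?thesis .
qed

lemma emeasure_le_of_inner_balls:
  fixes S :: "'a::euclidean_space set"
  assumes S: "S \<in> sets lborel" "S \<subseteq> ball 0 1"
    and B: "\<And>r. 0 < r \<Longrightarrow> r < 1 \<Longrightarrow> emeasure lborel (S \<inter> ball 0 r) \<le> B"
  shows "emeasure lborel S \<le> B"
proof -
  define A where "A n = S \<inter> ball 0 (1 - 1 / (real n + 2))" for n :: nat
  have "range A \<subseteq> sets lborel" using S(1) by (auto simp: A_def)
  moreover have "incseq A"
  proof (rule incseq_SucI)
    fix n
    have "1 - 1 / (real n + 2) \<le> 1 - 1 / (real (Suc n) + 2)" by (simp add: frac_le)
    then show "A n \<subseteq> A (Suc n)" by (auto simp: A_def)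
  qed
  moreover have "(\<Union>n. A n) = S"
  proof (intro equalityI subsetI)
    fix z assume "z \<in> S"
    then have "norm z < 1" using S(2) by auto
    then obtain n :: nat where "1 / (1 - norm z) < real n" using reals_Archimedean2 by blast
    then have "1 / (real n + 2) < 1 - norm z" using \<open>norm z < 1\<close> by (simp add: field_simps)
    with \<open>z \<in> S\<close> have "z \<in> A n" by (auto simp: A_def)
    then show "z \<in> (\<Union>n. A n)" by blast
  qed (auto simp: A_def)
  ultimately have "emeasure lborel S = (SUP n. emeasure lborel (A n))"
    using SUP_emeasure_incseq[of A lborel] by simp
  also have "\<dots> \<le> B"
    unfolding A_def by (intro SUP_least B) (auto simp: field_simps)
  finally show ?thesis .
qed

lemma open_level_set_norm:
  assumes "continuous_on S g" "open S"
  shows "open {z \<in> S. c < norm (g z)}"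
proof -
  have "open (S \<inter> (\<lambda>z. norm (g z)) -` {c<..})"
    using assms by (intro continuous_open_preimage continuous_intros) auto
  moreover have "S \<inter> (\<lambda>z. norm (g z)) -` {c<..} = {z \<in> S. c < norm (g z)}" by auto
  ultimately show ?thesis by simp
qed

lemma le_square_of_mult_le_mult_sqrt:
  fixes m a c :: real
  assumes "0 \<le> m" "0 < a" "a * m \<le> c * sqrt m"
  shows "m \<le> (c / a)\<^sup>2"
proof (cases "m = 0")
  case False
  then have "0 < sqrt m" using assms(1) by simp
  moreover have "(a * sqrt m) * sqrt m \<le> c * sqrt m"
    using assms by (simp add: mult.assoc)
  ultimately have "a * sqrt m \<le> c"
    by (rule mult_right_le_imp_le[rotated])
  then have "sqrt m \<le> c / a"
    using assms(2) by (simp add: field_simps)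
  from power_mono[OF this real_sqrt_ge_zero[OF assms(1)], of 2] show ?thesis
    using assms(1) by simp
qed simp

lemma emeasure_inverse_dist_gt_le:
  fixes c :: complex
  assumes s: "0 < s"
  shows "emeasure lborel {z. s < 1 / norm (c - z)} \<le> ennreal (pi / s\<^sup>2)"
proof -
  have "{z. s < 1 / norm (c - z)} \<subseteq> cball c (1 / s)"
  proof
    fix z assume z: "z \<in> {z. s < 1 / norm (c - z)}"
    then have "0 < norm (c - z)" using s by (cases "c = z") auto
    with z s show "z \<in> cball c (1 / s)" by (auto simp: dist_norm field_simps)
  qed
  then have "emeasure lborel {z. s < 1 / norm (c - z)} \<le> emeasure lborel (cball c (1 / s))"
    by (rule emeasure_mono) simp
  also have "\<dots> = ennreal (pi / s\<^sup>2)"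
    using s by (simp add: emeasure_cball unit_ball_vol_2 power_divide)
  finally show ?thesis .
qed

lemma nn_integral_inverse_dist_le:
  fixes E :: "complex set"
  assumes E [measurable]: "E \<in> sets lborel" and fin: "emeasure lborel E < \<infinity>"
  shows "(\<integral>\<^sup>+z. ennreal (1 / norm (c - z)) * indicator E z \<partial>lborel)
           \<le> ennreal ((1 + 4 * pi) * sqrt (measure lborel E))"
proof -
  define m where "m = measure lborel E"
  have Em: "emeasure lborel E = ennreal m"
    unfolding m_def using fin by (simp add: emeasure_eq_ennreal_measure)
  have m0: "0 \<le> m" unfolding m_def by (rule measure_nonneg)
  show ?thesis
  proof (cases "m = 0")
    case True
    then have "E \<in> null_sets lborel" using Em E by (simp add: null_sets_def)
    then show ?thesis by (simp add: nn_integral_null_set)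
  next
    case False
    then have \<rho>: "0 < sqrt m" using m0 by simp
    define g where "g z = indicator E z / norm (c - z)" for z
    have [measurable]: "g \<in> borel_measurable lborel" unfolding g_def by measurable
    have "(\<integral>\<^sup>+z. ennreal (1 / norm (c - z)) * indicator E z \<partial>lborel) = (\<integral>\<^sup>+z. ennreal (g z) \<partial>lborel)"
      by (intro nn_integral_cong) (simp add: g_def split: split_indicator)
    also have "\<dots> \<le> ennreal (1 / sqrt m * m + 4 * pi / (1 / sqrt m))"
    proof (rule nn_integral_le_of_weak_type_bound)
      show "emeasure lborel {z \<in> space lborel. 0 < g z} \<le> ennreal m"
        unfolding Em[symmetric] using E
        by (intro emeasure_mono) (auto simp: g_def split: split_indicator_asm)
      fix lam :: real assume "0 < lam"
      then have "{z \<in> space lborel. lam < g z} \<subseteq> {z. lam < 1 / norm (c - z)}"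
        by (auto simp: g_def split: split_indicator_asm)
      then have "emeasure lborel {z \<in> space lborel. lam < g z} \<le> emeasure lborel {z. lam < 1 / norm (c - z)}"
        by (rule emeasure_mono) measurable
      also have "\<dots> \<le> ennreal (pi / lam\<^sup>2)"
        using \<open>0 < lam\<close> by (rule emeasure_inverse_dist_gt_le)
      finally show "emeasure lborel {z \<in> space lborel. lam < g z} \<le> ennreal (pi / lam\<^sup>2)" .
    qed (use \<rho> m0 in auto)
    also have "1 / sqrt m * m + 4 * pi / (1 / sqrt m) = (1 + 4 * pi) * sqrt m"
      using m0 by (simp add: field_simps real_div_sqrt)
    finally show ?thesis unfolding m_def .
  qed
qed

lemma norm_circlepath_0 [simp]: "norm (circlepath 0 r t) = \<bar>r\<bar>"
  by (simp add: circlepath norm_mult)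

lemma continuous_on_circlepath [continuous_intros]: "continuous_on S (circlepath z r)"
  unfolding circlepath by (intro continuous_intros)

lemma continuous_on_holomorphic_circlepath_0:
  assumes "f holomorphic_on cball 0 r" "0 \<le> r"
  shows "continuous_on UNIV (\<lambda>t. f (circlepath 0 r t))"
  using assms by (intro continuous_on_compose2[OF holomorphic_on_imp_continuous_on[OF assms(1)]]
      continuous_on_circlepath) auto

lemma borel_measurable_circlepath [measurable]: "circlepath z r \<in> borel_measurable borel"
  by (intro borel_measurable_continuous_onI continuous_on_circlepath)

lemma borel_measurable_Re_holomorphic_circlepath_0:
  assumes "f holomorphic_on cball 0 r" "0 \<le> r"
  shows "(\<lambda>t. Re (f (circlepath 0 r t))) \<in> borel_measurable borel"
  using continuous_on_holomorphic_circlepath_0[OF assms]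
  by (intro borel_measurable_continuous_onI continuous_intros)

lemma circlepath_0_nonzero: "r \<noteq> 0 \<Longrightarrow> circlepath 0 r t \<noteq> 0"
  using norm_circlepath_0[of r t] by force

lemma cnj_circlepath_0:
  assumes "r \<noteq> 0"
  shows "cnj (circlepath 0 r t) = of_real (r\<^sup>2) / circlepath 0 r t"
proof -
  have "circlepath 0 r t * cnj (circlepath 0 r t) = of_real (r\<^sup>2)"
    by (simp flip: complex_norm_square)
  with circlepath_0_nonzero[OF assms] show ?thesis
    by (simp add: field_simps)
qed

lemma vector_derivative_circlepath_0:
  "vector_derivative (circlepath 0 r) (at t) = 2 * pi * \<i> * circlepath 0 r t"
  unfolding vector_derivative_circlepath by (simp add: circlepath)

lemma Cauchy_integral_circlepath_0_param:
  assumes "f holomorphic_on cball 0 r" "norm w < r"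
  shows "((\<lambda>t. f (circlepath 0 r t) * circlepath 0 r t / (circlepath 0 r t - w)) has_integral f w) {0..1}"
proof -
  let ?c = "circlepath 0 r"
  have "((\<lambda>u. f u / (u - w)) has_contour_integral (2 * pi * \<i> * f w)) ?c"
    using Cauchy_integral_circlepath_simple[of f 0 r w] assms by simp
  then have "((\<lambda>t. f (?c t) / (?c t - w) * (2 * pi * \<i> * ?c t)) has_integral 2 * pi * \<i> * f w) {0..1}"
    by (simp only: has_contour_integral vector_derivative_circlepath_0 mult.assoc)
  from has_integral_mult_right[OF this, of "1 / (2 * pi * \<i>)"] show ?thesis
    by (simp add: field_simps)
qed

lemma mean_value_circlepath_0:
  assumes "f holomorphic_on cball 0 r" "0 < r"
  shows "((\<lambda>t. f (circlepath 0 r t)) has_integral f 0) {0..1}"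
  using Cauchy_integral_circlepath_0_param[OF assms(1), of 0] assms(2) circlepath_0_nonzero[of r]
  by simp

lemma Cauchy_integral_cnj_circlepath_0:
  assumes hol: "f holomorphic_on cball 0 r" and z: "norm z < r"
  shows "((\<lambda>t. cnj (f (circlepath 0 r t)) * circlepath 0 r t / (circlepath 0 r t - z))
           has_integral cnj (f 0)) {0..1}"
proof -
  let ?c = "circlepath 0 r"
  have r: "0 < r" using z norm_ge_zero[of z] by linarith
  \<comment> \<open>On the circle \<open>cnj w = r\<^sup>2 / w\<close>, so the integrand is the conjugate of the mean value integrand of \<open>g\<close>.\<close>
  define g where "g w = f w * of_real (r\<^sup>2) / (of_real (r\<^sup>2) - cnj z * w)" for w
  have "of_real (r\<^sup>2) - cnj z * w \<noteq> 0" if "w \<in> cball 0 r" for w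
  proof -
    have "norm (cnj z * w) \<le> norm z * r"
      using that by (auto simp: norm_mult intro: mult_left_mono)
    also have "\<dots> < r\<^sup>2" using z r by (simp add: power2_eq_square)
    finally show ?thesis by (metis norm_of_real abs_of_nonneg zero_le_power2 eq_iff_diff_eq_0 less_irrefl)
  qed
  then have "g holomorphic_on cball 0 r"
    unfolding g_def by (intro holomorphic_intros hol) auto
  from has_integral_cnj[THEN iffD2, OF mean_value_circlepath_0[OF this r]]
  have "((\<lambda>t. cnj (g (?c t))) has_integral cnj (f 0)) {0..1}"
    using r by (simp add: g_def o_def)
  moreover have "cnj (g (?c t)) = cnj (f (?c t)) * ?c t / (?c t - z)" for t
  proof -
    have "?c t \<noteq> z" using z r by (metis norm_circlepath_0 abs_of_pos less_irrefl)
    then show ?thesis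
      using circlepath_0_nonzero[of r t] r by (simp add: g_def cnj_circlepath_0 field_simps)
  qed
  ultimately show ?thesis by simp
qed

lemma Schwarz_integral_formula_circlepath_0:
  assumes hol: "f holomorphic_on cball 0 r" and z: "norm z < r"
  shows "((\<lambda>t. of_real (Re (f (circlepath 0 r t))) *
              ((circlepath 0 r t + z) / (circlepath 0 r t - z)))
           has_integral f z - \<i> * of_real (Im (f 0))) {0..1}"
proof -
  let ?c = "circlepath 0 r"
  have r: "0 < r" using z norm_ge_zero[of z] by linarith
  have cz: "?c t \<noteq> z" for t using z r by (metis norm_circlepath_0 abs_of_pos less_irrefl)
  have I_mean: "((\<lambda>t. f (?c t)) has_integral f 0) {0..1}"
    by (rule mean_value_circlepath_0[OF hol r])
  have I_Re: "((\<lambda>t. (f (?c t) + cnj (f (?c t))) / 2) has_integral (f 0 + cnj (f 0)) / 2) {0..1}"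
    using has_integral_divide[OF has_integral_add[OF I_mean has_integral_cnj[THEN iffD2, OF I_mean]]]
    by (simp add: o_def)
  have "((\<lambda>t. f (?c t) * ?c t / (?c t - z) + cnj (f (?c t)) * ?c t / (?c t - z)
          - (f (?c t) + cnj (f (?c t))) / 2)
        has_integral f z + cnj (f 0) - (f 0 + cnj (f 0)) / 2) {0..1}"
    by (intro has_integral_diff has_integral_add I_Re Cauchy_integral_circlepath_0_param
        Cauchy_integral_cnj_circlepath_0 hol z)
  moreover have "f z + cnj (f 0) - (f 0 + cnj (f 0)) / 2 = f z - \<i> * of_real (Im (f 0))"
    by (simp add: complex_eq_iff)
  moreover have "a * c / (c - z) + cnj a * c / (c - z) - (a + cnj a) / 2
        = of_real (Re a) * ((c + z) / (c - z))" if "c \<noteq> z" for a c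
  proof -
    have "(a + cnj a) / 2 * ((c + z) / (c - z)) = (a + cnj a) / 2 * (2 * c / (c - z) - 1)"
      using that by (simp add: field_simps)
    also have "\<dots> = a * c / (c - z) + cnj a * c / (c - z) - (a + cnj a) / 2"
      by (simp add: right_diff_distrib distrib_right add_divide_distrib)
    finally show ?thesis by (simp add: complex_add_cnj)
  qed
  ultimately show ?thesis using cz by simp
qed

lemma norm_le_Im_plus_kernel_integral:
  assumes hol: "f holomorphic_on cball 0 r"
    and nonneg: "\<forall>w\<in>sphere 0 r. 0 \<le> Re (f w)" and z: "norm z < r"
  shows "ennreal (norm (f z)) \<le> ennreal \<bar>Im (f 0)\<bar> +
     (\<integral>\<^sup>+t. ennreal (2 * r * Re (f (circlepath 0 r t))) *
        ennreal (1 / norm (circlepath 0 r t - z)) * indicator {0..1} t \<partial>lborel)"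
proof -
  let ?c = "circlepath 0 r"
  have r: "0 < r" using z norm_ge_zero[of z] by linarith
  have cz: "?c t \<noteq> z" for t using z r by (metis norm_circlepath_0 abs_of_pos less_irrefl)
  have U: "0 \<le> Re (f (?c t))" for t using nonneg r by simp
  define B where "B t = 2 * r * Re (f (?c t)) / norm (?c t - z)" for t
  have B: "0 \<le> B t" for t unfolding B_def using U r by simp
  have "continuous_on {0..1} B"
    using continuous_on_holomorphic_circlepath_0[OF hol] r
    unfolding B_def by (intro continuous_intros) (auto intro: continuous_on_subset simp: cz)
  then have intB: "B integrable_on {0..1}" by (rule integrable_continuous_interval)
  have S: "((\<lambda>t. of_real (Re (f (?c t))) * ((?c t + z) / (?c t - z)))
           has_integral f z - \<i> * of_real (Im (f 0))) {0..1}"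
    by (rule Schwarz_integral_formula_circlepath_0[OF hol z])
  have "norm (of_real (Re (f (?c t))) * ((?c t + z) / (?c t - z))) \<le> B t" for t
  proof -
    have "norm (?c t + z) \<le> 2 * r"
      using norm_triangle_ineq[of "?c t" z] z r by simp
    then have "Re (f (?c t)) * norm (?c t + z) \<le> Re (f (?c t)) * (2 * r)"
      using U[of t] by (rule mult_left_mono)
    from divide_right_mono[OF this norm_ge_zero]
    have "Re (f (?c t)) * norm (?c t + z) / norm (?c t - z) \<le> B t"
      unfolding B_def by (simp add: mult_ac)
    then show ?thesis
      using U[of t] by (simp add: norm_mult norm_divide)
  qed
  then have "norm (f z - \<i> * of_real (Im (f 0))) \<le> integral {0..1} B"
    using integral_norm_bound_integral[OF has_integral_integrable[OF S] intB] S
    by (simp add: integral_unique)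
  then have "norm (f z) \<le> \<bar>Im (f 0)\<bar> + integral {0..1} B"
    using norm_triangle_ineq[of "f z - \<i> * of_real (Im (f 0))" "\<i> * of_real (Im (f 0))"]
    by (simp add: norm_mult)
  moreover have "(\<integral>\<^sup>+t. ennreal (B t) * indicator {0..1} t \<partial>lborel) = ennreal (integral {0..1} B)"
    using B by (intro nn_integral_has_integral_lebesgue' integrable_integral intB)
  moreover have "ennreal (B t) = ennreal (2 * r * Re (f (?c t))) * ennreal (1 / norm (?c t - z))" for t
    unfolding B_def using U[of t] r by (simp add: ennreal_mult' divide_inverse)
  moreover have "0 \<le> integral {0..1} B"
    using B by (intro integral_nonneg intB)
  ultimately show ?thesis
    by (simp add: ennreal_plus[symmetric] del: ennreal_plus)
qed

lemma nn_integral_Schwarz_majorant_le: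
  assumes hol: "f holomorphic_on cball 0 r" and nonneg: "\<forall>w\<in>sphere 0 r. 0 \<le> Re (f w)"
    and r: "0 < r" and E [measurable]: "E \<in> sets lborel" and fin: "emeasure lborel E < \<infinity>"
  shows "(\<integral>\<^sup>+z. (\<integral>\<^sup>+t. ennreal (2 * r * Re (f (circlepath 0 r t))) *
            ennreal (1 / norm (circlepath 0 r t - z)) * indicator {0..1} t \<partial>lborel) * indicator E z \<partial>lborel)
         \<le> ennreal (2 * r * Re (f 0) * ((1 + 4 * pi) * sqrt (measure lborel E)))"
proof -
  let ?c = "circlepath 0 r"
  define U where "U t = 2 * r * Re (f (?c t))" for t
  have U: "0 \<le> U t" for t using nonneg r by (simp add: U_def)
  have [measurable]: "(\<lambda>t. Re (f (?c t))) \<in> borel_measurable borel"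
    using borel_measurable_Re_holomorphic_circlepath_0[OF hol] r by simp
  have [measurable]: "U \<in> borel_measurable borel"
    unfolding U_def by measurable
  have "(\<integral>\<^sup>+z. (\<integral>\<^sup>+t. ennreal (U t) * ennreal (1 / norm (?c t - z)) * indicator {0..1} t \<partial>lborel) * indicator E z \<partial>lborel)
      = (\<integral>\<^sup>+z. (\<integral>\<^sup>+t. ennreal (U t) * ennreal (1 / norm (?c t - z)) * indicator {0..1} t * indicator E z \<partial>lborel) \<partial>lborel)"
    by (intro nn_integral_cong nn_integral_multc[symmetric]) measurable
  also have "\<dots> = (\<integral>\<^sup>+t. (\<integral>\<^sup>+z. ennreal (U t) * ennreal (1 / norm (?c t - z)) * indicator {0..1} t * indicator E z \<partial>lborel) \<partial>lborel)"
    by (rule lborel_pair.Fubini'[symmetric]) measurable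
  also have "\<dots> = (\<integral>\<^sup>+t. ennreal (U t) * indicator {0..1} t *
      (\<integral>\<^sup>+z. ennreal (1 / norm (?c t - z)) * indicator E z \<partial>lborel) \<partial>lborel)"
    by (intro nn_integral_cong) (simp add: nn_integral_cmult[symmetric] mult_ac)
  also have "\<dots> \<le> (\<integral>\<^sup>+t. ennreal (U t) * indicator {0..1} t * ennreal ((1 + 4 * pi) * sqrt (measure lborel E)) \<partial>lborel)"
    by (intro nn_integral_mono mult_left_mono nn_integral_inverse_dist_le E fin) simp
  also have "\<dots> = (\<integral>\<^sup>+t. ennreal (U t) * indicator {0..1} t \<partial>lborel) * ennreal ((1 + 4 * pi) * sqrt (measure lborel E))"
    by (rule nn_integral_multc) measurable
  also have "(\<integral>\<^sup>+t. ennreal (U t) * indicator {0..1} t \<partial>lborel) = ennreal (2 * r * Re (f 0))"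
    using U has_integral_mult_right[OF has_integral_Re[OF mean_value_circlepath_0[OF hol r]], of "2 * r"]
    by (intro nn_integral_has_integral_lebesgue') (auto simp: U_def)
  also have "ennreal (2 * r * Re (f 0)) * ennreal ((1 + 4 * pi) * sqrt (measure lborel E))
      = ennreal (2 * r * Re (f 0) * ((1 + 4 * pi) * sqrt (measure lborel E)))"
    by (rule ennreal_mult''[symmetric]) simp
  finally show ?thesis unfolding U_def .
qed

lemma nn_integral_norm_on_subset_ball_le:
  assumes hol: "f holomorphic_on cball 0 r" and nonneg: "\<forall>w\<in>sphere 0 r. 0 \<le> Re (f w)"
    and r: "0 < r" and E [measurable]: "E \<in> sets lborel" and E_ball: "E \<subseteq> ball 0 r"
  shows "(\<integral>\<^sup>+z. ennreal (norm (f z)) * indicator E z \<partial>lborel)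
     \<le> ennreal (\<bar>Im (f 0)\<bar> * measure lborel E
                + 2 * r * Re (f 0) * ((1 + 4 * pi) * sqrt (measure lborel E)))"
proof -
  let ?c = "circlepath 0 r"
  define K where "K z = (\<integral>\<^sup>+t. ennreal (2 * r * Re (f (?c t))) *
      ennreal (1 / norm (?c t - z)) * indicator {0..1} t \<partial>lborel)" for z
  have [measurable]: "(\<lambda>t. Re (f (?c t))) \<in> borel_measurable borel"
    using borel_measurable_Re_holomorphic_circlepath_0[OF hol] r by simp
  have [measurable]: "K \<in> borel_measurable lborel"
    unfolding K_def by measurable
  have fin: "emeasure lborel E < \<infinity>"
    by (rule emeasure_bounded_finite[OF bounded_subset[OF bounded_ball E_ball]])
  then have Em: "emeasure lborel E = ennreal (measure lborel E)"
    by (simp add: emeasure_eq_ennreal_measure)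
  have "(\<integral>\<^sup>+z. ennreal (norm (f z)) * indicator E z \<partial>lborel)
      \<le> (\<integral>\<^sup>+z. ennreal \<bar>Im (f 0)\<bar> * indicator E z + K z * indicator E z \<partial>lborel)"
    using E_ball norm_le_Im_plus_kernel_integral[OF hol nonneg]
    by (intro nn_integral_mono) (auto simp: K_def split: split_indicator)
  also have "\<dots> = (\<integral>\<^sup>+z. ennreal \<bar>Im (f 0)\<bar> * indicator E z \<partial>lborel) + (\<integral>\<^sup>+z. K z * indicator E z \<partial>lborel)"
    by (rule nn_integral_add) measurable
  also have "\<dots> = ennreal (\<bar>Im (f 0)\<bar> * measure lborel E) + (\<integral>\<^sup>+z. K z * indicator E z \<partial>lborel)"
    using nn_integral_cmult_indicator[OF E, of "ennreal \<bar>Im (f 0)\<bar>"] by (simp add: Em ennreal_mult)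
  also have "\<dots> \<le> ennreal (\<bar>Im (f 0)\<bar> * measure lborel E)
      + ennreal (2 * r * Re (f 0) * ((1 + 4 * pi) * sqrt (measure lborel E)))"
    unfolding K_def by (intro add_left_mono nn_integral_Schwarz_majorant_le hol nonneg r E fin)
  also have "\<dots> = ennreal (\<bar>Im (f 0)\<bar> * measure lborel E
                + 2 * r * Re (f 0) * ((1 + 4 * pi) * sqrt (measure lborel E)))"
  proof (rule ennreal_plus[symmetric])
    show "0 \<le> 2 * r * Re (f 0) * ((1 + 4 * pi) * sqrt (measure lborel E))"
      using has_integral_nonneg[OF has_integral_Re[OF mean_value_circlepath_0[OF hol r]]] nonneg r
      by simp
  qed simp
  finally show ?thesis .
qed

lemma emeasure_level_set_ball_le:
  assumes hol: "f holomorphic_on ball 0 1" and nonneg: "\<forall>z\<in>ball 0 1. 0 \<le> Re (f z)"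
    and r: "0 < r" "r < 1" and lam: "2 * norm (f 0) < lam"
  shows "emeasure lborel {z \<in> ball 0 r. lam < norm (f z)}
           \<le> ennreal (16 * (1 + 4 * pi)\<^sup>2 / lam\<^sup>2 * (norm (f 0))\<^sup>2)"
proof -
  have lam0: "0 < lam" using lam norm_ge_zero[of "f 0"] by linarith
  define E where "E = {z \<in> ball 0 r. lam < norm (f z)}"
  define m where "m = measure lborel E"
  have m0: "0 \<le> m" unfolding m_def by (rule measure_nonneg)
  have hol_r: "f holomorphic_on cball 0 r"
    by (rule holomorphic_on_subset[OF hol]) (use r in auto)
  have "open E"
    unfolding E_def using r
    by (intro open_level_set_norm continuous_on_subset[OF holomorphic_on_imp_continuous_on[OF hol]]) auto
  then have E [measurable]: "E \<in> sets lborel" by simp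
  have E_ball: "E \<subseteq> ball 0 r" unfolding E_def by auto
  have Em: "emeasure lborel E = ennreal m"
    using emeasure_bounded_finite[OF bounded_subset[OF bounded_ball E_ball]]
    unfolding m_def by (simp add: emeasure_eq_ennreal_measure)
  have "ennreal (lam * m) = (\<integral>\<^sup>+z. ennreal lam * indicator E z \<partial>lborel)"
    using nn_integral_cmult_indicator[OF E, of "ennreal lam"] lam0 by (simp add: Em ennreal_mult')
  also have "\<dots> \<le> (\<integral>\<^sup>+z. ennreal (norm (f z)) * indicator E z \<partial>lborel)"
    by (intro nn_integral_mono) (auto simp: E_def split: split_indicator)
  also have "\<dots> \<le> ennreal (\<bar>Im (f 0)\<bar> * m + 2 * r * Re (f 0) * ((1 + 4 * pi) * sqrt m))"
    unfolding m_def using r nonneg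
    by (intro nn_integral_norm_on_subset_ball_le hol_r E) (auto simp: E_def)
  finally have "lam * m \<le> \<bar>Im (f 0)\<bar> * m + 2 * r * Re (f 0) * ((1 + 4 * pi) * sqrt m)"
    using nonneg r by (subst (asm) ennreal_le_iff) (auto simp: m_def)
  moreover have "\<bar>Im (f 0)\<bar> * m \<le> norm (f 0) * m"
    by (intro mult_right_mono abs_Im_le_cmod) (simp add: m_def)
  moreover have "r * Re (f 0) \<le> norm (f 0)"
    using r nonneg mult_left_le_one_le[of "Re (f 0)" r] complex_Re_le_cmod[of "f 0"] by simp
  then have "2 * r * Re (f 0) * ((1 + 4 * pi) * sqrt m) \<le> 2 * norm (f 0) * ((1 + 4 * pi) * sqrt m)"
    using m0 by (intro mult_right_mono) auto
  moreover have "lam / 2 * m \<le> (lam - norm (f 0)) * m"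
    using lam m0 by (intro mult_right_mono) auto
  ultimately have "lam / 2 * m \<le> 2 * norm (f 0) * (1 + 4 * pi) * sqrt m"
    by (simp add: left_diff_distrib mult.assoc)
  then have "m \<le> (2 * norm (f 0) * (1 + 4 * pi) / (lam / 2))\<^sup>2"
    using m0 lam0 by (intro le_square_of_mult_le_mult_sqrt) auto
  also have "\<dots> = 16 * (1 + 4 * pi)\<^sup>2 / lam\<^sup>2 * (norm (f 0))\<^sup>2"
    by (simp add: power2_eq_square field_simps)
  finally show ?thesis
    unfolding E_def[symmetric] Em by (rule ennreal_leI)
qed

lemma space_disk_area [simp]: "space disk_area = ball 0 1"
  unfolding disk_area_def by (simp add: space_scale_measure space_restrict_space)

lemma emeasure_disk_area:
  "A \<subseteq> ball 0 1 \<Longrightarrow> emeasure disk_area A = ennreal (1 / pi) * emeasure lborel A"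
  unfolding disk_area_def by (simp add: emeasure_restrict_space)

lemma emeasure_disk_area_ball [simp]: "emeasure disk_area (ball 0 1) = 1"
proof -
  have "emeasure disk_area (ball 0 1) = ennreal (1 / pi) * ennreal pi"
    by (simp add: emeasure_disk_area emeasure_ball unit_ball_vol_2)
  then show ?thesis by (simp flip: ennreal_mult')
qed

lemma borel_measurable_disk_area:
  assumes "continuous_on (ball 0 1) g"
  shows "g \<in> borel_measurable disk_area"
  using borel_measurable_continuous_on_restrict[OF assms]
  unfolding disk_area_def by (simp add: measurable_cong_sets[OF sets_restrict_space_cong[OF sets_lborel] refl])

lemma emeasure_level_set_unit_ball_le:
  assumes hol: "f holomorphic_on ball 0 1" and nonneg: "\<forall>z\<in>ball 0 1. 0 \<le> Re (f z)"
    and lam: "2 * norm (f 0) < lam"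
  shows "emeasure lborel {z \<in> ball 0 1. lam < norm (f z)}
           \<le> ennreal (16 * (1 + 4 * pi)\<^sup>2 / lam\<^sup>2 * (norm (f 0))\<^sup>2)"
proof (rule emeasure_le_of_inner_balls)
  show "{z \<in> ball 0 1. lam < norm (f z)} \<in> sets lborel"
    using open_level_set_norm[OF holomorphic_on_imp_continuous_on[OF hol] open_ball] by simp
  fix r :: real assume r: "0 < r" "r < 1"
  then have "{z \<in> ball 0 1. lam < norm (f z)} \<inter> ball 0 r = {z \<in> ball 0 r. lam < norm (f z)}"
    by auto
  with emeasure_level_set_ball_le[OF hol nonneg r lam]
  show "emeasure lborel ({z \<in> ball 0 1. lam < norm (f z)} \<inter> ball 0 r)
      \<le> ennreal (16 * (1 + 4 * pi)\<^sup>2 / lam\<^sup>2 * (norm (f 0))\<^sup>2)"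
    by simp
qed auto

lemma emeasure_disk_area_level_set_le:
  assumes hol: "f holomorphic_on ball 0 1" and nonneg: "\<forall>z\<in>ball 0 1. 0 \<le> Re (f z)" and lam: "0 < lam"
  shows "emeasure disk_area {z \<in> ball 0 1. lam < norm (f z)}
           \<le> ennreal (16 * (1 + 4 * pi)\<^sup>2 / lam\<^sup>2 * (norm (f 0))\<^sup>2)"
proof -
  define S where "S = {z \<in> ball 0 1. lam < norm (f z)}"
  define bd where "bd = 16 * (1 + 4 * pi)\<^sup>2 / lam\<^sup>2 * (norm (f 0))\<^sup>2"
  show ?thesis
  proof (cases "lam \<le> 2 * norm (f 0)")
    case True
    have "1 \<le> (1 + 4 * pi)\<^sup>2"
      by (rule one_le_power) (use pi_gt_zero in simp)
    then have "1 \<le> 16 * (1 + 4 * pi)\<^sup>2 * (1 / 4)" by linarith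
    also have "\<dots> \<le> 16 * (1 + 4 * pi)\<^sup>2 * ((norm (f 0))\<^sup>2 / lam\<^sup>2)"
    proof (rule mult_left_mono)
      have "lam\<^sup>2 \<le> (2 * norm (f 0))\<^sup>2"
        using True lam by (intro power_mono) auto
      then show "1 / 4 \<le> (norm (f 0))\<^sup>2 / lam\<^sup>2"
        using lam by (simp add: field_simps power_mult_distrib)
    qed simp
    also have "\<dots> = bd" unfolding bd_def by simp
    finally have "1 \<le> bd" .
    have "emeasure disk_area S \<le> emeasure disk_area (space disk_area)"
      by (rule emeasure_space)
    also have "\<dots> \<le> ennreal bd" using \<open>1 \<le> bd\<close> by simp
    finally show ?thesis unfolding S_def bd_def .
  next
    case False
    then have "emeasure lborel S \<le> ennreal bd"
      unfolding S_def bd_def by (intro emeasure_level_set_unit_ball_le hol nonneg) simp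
    then have "ennreal (1 / pi) * emeasure lborel S \<le> ennreal (1 / pi * bd)"
      by (rule ennreal_mult_left_le) simp
    moreover have "emeasure disk_area S = ennreal (1 / pi) * emeasure lborel S"
      by (rule emeasure_disk_area) (auto simp: S_def)
    ultimately have "emeasure disk_area S \<le> ennreal (1 / pi * bd)" by simp
    also have "ennreal (1 / pi * bd) \<le> ennreal bd"
      using mult_right_mono[of "1 / pi" 1 bd] pi_gt3 by (simp add: bd_def ennreal_leI)
    finally show ?thesis unfolding S_def bd_def .
  qed
qed

lemma nn_integral_disk_area_norm_le:
  assumes hol: "f holomorphic_on ball 0 1" and pos: "\<forall>z\<in>ball 0 1. 0 < Re (f z)"
  shows "(\<integral>\<^sup>+z. ennreal (norm (f z)) \<partial>disk_area) \<le> ennreal ((1 + 4 * (16 * (1 + 4 * pi)\<^sup>2)) * norm (f 0))"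
proof -
  define C where "C = 16 * (1 + 4 * pi)\<^sup>2"
  have "0 < Re (f 0)" using pos by simp
  then have f0: "0 < norm (f 0)" using complex_Re_le_cmod[of "f 0"] by linarith
  have "(\<integral>\<^sup>+z. ennreal (norm (f z)) \<partial>disk_area) \<le> ennreal (norm (f 0) * 1 + 4 * (C * (norm (f 0))\<^sup>2) / norm (f 0))"
  proof (rule nn_integral_le_of_weak_type_bound)
    show "(\<lambda>z. norm (f z)) \<in> borel_measurable disk_area"
      by (intro borel_measurable_disk_area continuous_intros holomorphic_on_imp_continuous_on hol)
    show "emeasure disk_area {z \<in> space disk_area. 0 < norm (f z)} \<le> ennreal 1"
      using emeasure_space[of disk_area] by simp
    fix lam :: real assume "0 < lam"
    then show "emeasure disk_area {z \<in> space disk_area. lam < norm (f z)} \<le> ennreal (C * (norm (f 0))\<^sup>2 / lam\<^sup>2)"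
      using emeasure_disk_area_level_set_le[OF hol] pos by (simp add: C_def less_imp_le)
  qed (use f0 in \<open>simp_all add: C_def\<close>)
  also have "norm (f 0) * 1 + 4 * (C * (norm (f 0))\<^sup>2) / norm (f 0) = (1 + 4 * C) * norm (f 0)"
    using f0 by (simp add: power2_eq_square field_simps)
  finally show ?thesis unfolding C_def .
qed

theorem lemma3p4:
  shows "(\<exists>C1::real>0. \<forall>f::complex \<Rightarrow> complex. \<forall>lam::real.
            f holomorphic_on ball 0 1 \<longrightarrow> (\<forall>z\<in>ball 0 1. Re (f z) > 0) \<longrightarrow> lam > 0 \<longrightarrow>
            emeasure disk_area {z \<in> ball 0 1. norm (f z) > lam}
              \<le> ennreal (C1 / lam\<^sup>2 * (norm (f 0))\<^sup>2))
       \<and> (\<exists>K1::real>0. \<forall>f::complex \<Rightarrow> complex.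
            f holomorphic_on ball 0 1 \<longrightarrow> (\<forall>z\<in>ball 0 1. Re (f z) > 0) \<longrightarrow>
            (\<integral>\<^sup>+ z. ennreal (norm (f z)) \<partial>disk_area) \<le> ennreal (K1 * norm (f 0)))"
proof -
  define C1 :: real where "C1 = 16 * (1 + 4 * pi)\<^sup>2"
  have "0 < 1 + 4 * pi" using pi_gt_zero by linarith
  then have "0 < C1" unfolding C1_def by simp
  moreover from this have "0 < 1 + 4 * C1" by simp
  ultimately show ?thesis
    unfolding C1_def using emeasure_disk_area_level_set_le nn_integral_disk_area_norm_le
    by (blast intro: less_imp_le)
qed

end
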